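(* Let $\xi_1,\xi_2,\dots$ be i.i.d. random variables with $E\xi_i=0$ and $E\xi_i^2=\sigma^2<\infty$. Let $\epsilon>0$. Let $k^*=k^*(n)$ be natural numbers with $0<k^*<n$ and $\lim_{n\to\infty}k^*/n=0$, and for each $n$ let $J_{k^*}\subset J=\{1,\dots,n\}$ be any set of $k^*$ distinct indices. Then $$\frac{S_{J\setminus J_{k^*}}}{n^{1/2}(\log n)^{1/2+\epsilon}}\to0\quad\text{a.s.},$$ where $S_{J\setminus J_{k^*}}=\sum_{i\in J\setminus J_{k^*}}\xi_i$.
   Context: For each $n$, $J=\{1,2,\dots,n\}$ and $J_{k^*}$ is an arbitrary set of $k^*$ distinct elements of $J$, where $k^*$ is either a fixed natural number $k$ or a sequence $k(n)$. *)

theory Defs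
  imports "HOL-Probability.Probability"
begin

end

theory Submission
  imports Defs "HOL-Real_Asymp.Real_Asymp" "HOL-Library.Discrete_Functions"
begin

text \<open>
  Only independence, centering and a second moment bound \<open>s\<close> are needed, and the index sets
  \<open>A n \<subseteq> {1..n}\<close> may be arbitrary, so the partial sums along \<open>A n\<close> are not a martingale.
  For \<open>2^m \<le> n < 2^(m+1)\<close> truncate every \<open>\<xi>\<^sub>i\<close> at \<open>T\<^sub>m = (2^m/(m+1))\<^sup>1\<^sup>/\<^sup>2\<close>. The centered
  truncated parts obey a Bernstein-type exponential bound, which makes
  \<open>P(|\<Sum>\<^bsub>A n\<^esub> \<dots>| \<ge> \<delta> a\<^sub>n) = O(n\<^sup>-\<^sup>2)\<close> with \<open>a\<^sub>n = 2^(m/2) (m log 2)\<^sup>p\<close>, \<open>p > 1/2\<close>; this is summable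
  over \<open>n\<close> whatever the sets \<open>A n\<close> are. The parts above \<open>T\<^sub>m\<close> are dominated, uniformly in
  \<open>A n\<close>, by the sum of their absolute values over \<open>{1..2^(m+1)}\<close>, whose fluctuation Chebyshev bounds by
  \<open>O(m\<^sup>-\<^sup>2\<^sup>p)\<close>, summable over \<open>m\<close>. All means are \<open>O(s 2^m / T\<^sub>m) = o(a\<^sub>n)\<close>. Borel--Cantelli
  finishes the proof, and \<open>a\<^sub>n \<le> n\<^sup>1\<^sup>/\<^sup>2 (log n)\<^sup>p\<close>.
\<close>

lemma exp_le_one_plus_x_plus_square:
  fixes x :: real
  assumes "x \<le> 1"
  shows "exp x \<le> 1 + x + x\<^sup>2"
proof (cases "x \<ge> 0")
  case True
  then show ?thesis using exp_bound assms by blast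
next
  case False
  \<comment> \<open>With \<open>y = -x > 0\<close>: \<open>(1 + x + x\<^sup>2) (1 + y) = 1 + y\<^sup>3 \<ge> 1 = exp x * exp y\<close> and \<open>1 + y \<le> exp y\<close>.\<close>
  define y where "y = - x"
  have "0 < y" using False by (simp add: y_def)
  have pos: "0 \<le> 1 + x + x\<^sup>2"
    using zero_le_power2[of "x + 1/2"] by (simp add: power2_eq_square algebra_simps)
  have "exp x * exp y = 1"
    by (simp add: y_def flip: exp_add)
  also have "\<dots> \<le> 1 + y ^ 3"
    using \<open>0 < y\<close> by simp
  also have "\<dots> = (1 + x + x\<^sup>2) * (1 + y)"
    by (simp add: y_def power2_eq_square power3_eq_cube algebra_simps)
  also have "\<dots> \<le> (1 + x + x\<^sup>2) * exp y"
    using pos by (intro mult_left_mono) simp_all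
  finally show ?thesis by simp
qed

definition trunc_le :: "real \<Rightarrow> real \<Rightarrow> real" where
  "trunc_le T y = (if \<bar>y\<bar> \<le> T then y else 0)"

definition trunc_gt :: "real \<Rightarrow> real \<Rightarrow> real" where
  "trunc_gt T y = (if \<bar>y\<bar> \<le> T then 0 else y)"

lemma borel_measurable_trunc_le [measurable]: "trunc_le T \<in> borel_measurable borel"
  unfolding trunc_le_def by measurable

lemma borel_measurable_trunc_gt [measurable]: "trunc_gt T \<in> borel_measurable borel"
  unfolding trunc_gt_def by measurable

lemma trunc_le_plus_trunc_gt: "trunc_le T y + trunc_gt T y = y"
  by (simp add: trunc_le_def trunc_gt_def)

lemma abs_trunc_le_le: "\<bar>trunc_le T y\<bar> \<le> \<bar>y\<bar>" "0 \<le> T \<Longrightarrow> \<bar>trunc_le T y\<bar> \<le> T"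
  by (auto simp: trunc_le_def)

lemma abs_trunc_gt_le: "\<bar>trunc_gt T y\<bar> \<le> \<bar>y\<bar>"
  by (simp add: trunc_gt_def)

lemma abs_trunc_gt_le_square_div:
  assumes "0 < T"
  shows "\<bar>trunc_gt T y\<bar> \<le> y\<^sup>2 / T"
proof (cases "\<bar>y\<bar> \<le> T")
  case False
  then have "T * \<bar>y\<bar> \<le> \<bar>y\<bar> * \<bar>y\<bar>" by (intro mult_right_mono) auto
  then show ?thesis using False assms by (simp add: trunc_gt_def field_simps power2_eq_square)
qed (simp add: trunc_gt_def)

context prob_space
begin

lemma square_integrable_dominated:
  fixes Y Z :: "'a \<Rightarrow> real"
  assumes [measurable]: "Y \<in> borel_measurable M"
    and "integrable M Z" "integrable M (\<lambda>x. (Z x)\<^sup>2)"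
    and dom: "\<And>x. \<bar>Y x\<bar> \<le> \<bar>Z x\<bar>"
  shows "integrable M Y" "integrable M (\<lambda>x. (Y x)\<^sup>2)"
    "expectation (\<lambda>x. (Y x)\<^sup>2) \<le> expectation (\<lambda>x. (Z x)\<^sup>2)"
proof -
  have sq: "(Y x)\<^sup>2 \<le> (Z x)\<^sup>2" for x
    using dom[of x] by (simp add: abs_le_square_iff)
  show Y: "integrable M Y"
    by (rule Bochner_Integration.integrable_bound[OF assms(2)]) (use dom in auto)
  show Y2: "integrable M (\<lambda>x. (Y x)\<^sup>2)"
    by (rule Bochner_Integration.integrable_bound[OF assms(3)]) (use sq in auto)
  show "expectation (\<lambda>x. (Y x)\<^sup>2) \<le> expectation (\<lambda>x. (Z x)\<^sup>2)"
    by (rule integral_mono[OF Y2 assms(3) sq])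
qed

lemma centered_integrable_and_moments:
  fixes Y :: "'a \<Rightarrow> real"
  assumes "integrable M Y" "integrable M (\<lambda>x. (Y x)\<^sup>2)"
  shows "integrable M (\<lambda>x. Y x - expectation Y)"
    "integrable M (\<lambda>x. (Y x - expectation Y)\<^sup>2)"
    "expectation (\<lambda>x. Y x - expectation Y) = 0"
    "expectation (\<lambda>x. (Y x - expectation Y)\<^sup>2) \<le> expectation (\<lambda>x. (Y x)\<^sup>2)"
proof -
  have eq: "(\<lambda>x. (Y x - expectation Y)\<^sup>2) = (\<lambda>x. (Y x)\<^sup>2 - 2 * expectation Y * Y x + (expectation Y)\<^sup>2)"
    by (simp add: power2_diff algebra_simps)
  show "integrable M (\<lambda>x. Y x - expectation Y)" "expectation (\<lambda>x. Y x - expectation Y) = 0"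
    using assms by (simp_all add: prob_space)
  show "integrable M (\<lambda>x. (Y x - expectation Y)\<^sup>2)"
    unfolding eq using assms by simp
  show "expectation (\<lambda>x. (Y x - expectation Y)\<^sup>2) \<le> expectation (\<lambda>x. (Y x)\<^sup>2)"
    unfolding eq using assms by (simp add: prob_space power2_eq_square)
qed

lemma expectation_abs_trunc_gt_le:
  fixes Z :: "'a \<Rightarrow> real"
  assumes [measurable]: "Z \<in> borel_measurable M" and "integrable M (\<lambda>x. (Z x)\<^sup>2)"
    and "expectation (\<lambda>x. (Z x)\<^sup>2) \<le> s" and "0 < T"
  shows "expectation (\<lambda>x. \<bar>trunc_gt T (Z x)\<bar>) \<le> s / T"
proof -
  have bound: "\<bar>trunc_gt T (Z x)\<bar> \<le> (Z x)\<^sup>2 / T" for x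
    by (rule abs_trunc_gt_le_square_div[OF \<open>0 < T\<close>])
  have "integrable M (\<lambda>x. (Z x)\<^sup>2 / T)"
    using assms(2) by simp
  moreover from this have "integrable M (\<lambda>x. \<bar>trunc_gt T (Z x)\<bar>)"
    by (rule Bochner_Integration.integrable_bound) (use bound \<open>0 < T\<close> in auto)
  ultimately have "expectation (\<lambda>x. \<bar>trunc_gt T (Z x)\<bar>) \<le> expectation (\<lambda>x. (Z x)\<^sup>2 / T)"
    using bound by (intro integral_mono)
  also have "\<dots> \<le> s / T"
    using assms by (simp add: divide_right_mono)
  finally show ?thesis by simp
qed

text \<open>Since \<open>E Z = 0\<close>, the mean of the small values is minus the mean of the large ones.\<close>

lemma abs_expectation_trunc_le_le:
  fixes Z :: "'a \<Rightarrow> real"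
  assumes [measurable]: "Z \<in> borel_measurable M" and "integrable M Z" "integrable M (\<lambda>x. (Z x)\<^sup>2)"
    and "expectation Z = 0" "expectation (\<lambda>x. (Z x)\<^sup>2) \<le> s" and "0 < T"
  shows "\<bar>expectation (\<lambda>x. trunc_le T (Z x))\<bar> \<le> s / T"
proof -
  have gt: "integrable M (\<lambda>x. trunc_gt T (Z x))"
    by (rule Bochner_Integration.integrable_bound[OF assms(2)]) (auto intro: abs_trunc_gt_le)
  have "expectation (\<lambda>x. trunc_le T (Z x)) = expectation (\<lambda>x. Z x - trunc_gt T (Z x))"
    by (intro Bochner_Integration.integral_cong) (simp_all add: trunc_le_def trunc_gt_def)
  also have "\<dots> = - expectation (\<lambda>x. trunc_gt T (Z x))"
    using assms gt by simp
  finally have "\<bar>expectation (\<lambda>x. trunc_le T (Z x))\<bar> \<le> expectation (\<lambda>x. \<bar>trunc_gt T (Z x)\<bar>)"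
    using integral_abs_bound[of M "\<lambda>x. trunc_gt T (Z x)"] by simp
  also have "\<dots> \<le> s / T"
    by (rule expectation_abs_trunc_gt_le) (use assms in auto)
  finally show ?thesis .
qed

lemma nn_integral_exp_le:
  fixes X :: "'a \<Rightarrow> real"
  assumes [measurable]: "X \<in> borel_measurable M"
    and bound: "\<And>x. x \<in> space M \<Longrightarrow> \<bar>X x\<bar> \<le> b" and "0 < b"
    and "expectation X = 0" and "expectation (\<lambda>x. (X x)\<^sup>2) \<le> v"
  shows "(\<integral>\<^sup>+x. ennreal (exp (X x / b)) \<partial>M) \<le> ennreal (exp (v / b\<^sup>2))"
proof -
  have X: "integrable M X"
    by (rule integrable_const_bound[where B = b]) (use bound in auto)
  have X2: "integrable M (\<lambda>x. (X x)\<^sup>2)"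
    by (rule integrable_const_bound[where B = "b\<^sup>2"])
       (use bound \<open>0 < b\<close> in \<open>auto simp flip: abs_le_square_iff\<close>)
  have pointwise: "exp (X x / b) \<le> 1 + X x / b + (X x)\<^sup>2 / b\<^sup>2" if "x \<in> space M" for x
    using exp_le_one_plus_x_plus_square[of "X x / b"] bound[OF that] \<open>0 < b\<close>
    by (simp add: power_divide abs_le_iff)
  have expX: "integrable M (\<lambda>x. exp (X x / b))"
    by (rule integrable_const_bound[where B = "exp 1"])
      (use bound \<open>0 < b\<close> in \<open>auto simp: abs_le_iff intro!: AE_I2\<close>)
  have "(\<integral>\<^sup>+x. ennreal (exp (X x / b)) \<partial>M) = ennreal (expectation (\<lambda>x. exp (X x / b)))"
    by (rule nn_integral_eq_integral[OF expX]) auto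
  also have "expectation (\<lambda>x. exp (X x / b)) \<le> expectation (\<lambda>x. 1 + X x / b + (X x)\<^sup>2 / b\<^sup>2)"
    using X X2 pointwise by (intro integral_mono_AE expX) auto
  also have "\<dots> = 1 + expectation (\<lambda>x. (X x)\<^sup>2) / b\<^sup>2"
    using X X2 \<open>expectation X = 0\<close> by (simp add: prob_space)
  also have "\<dots> \<le> 1 + v / b\<^sup>2"
    using assms by (simp add: divide_right_mono)
  also have "\<dots> \<le> exp (v / b\<^sup>2)"
    by simp
  finally show ?thesis
    by (simp add: ennreal_leI)
qed

text \<open>
  A Bernstein-type bound: the variance enters, not just the range. Hoeffding's inequality would be
  too weak for the truncation levels used below.
\<close>

lemma prob_sum_ge_le_exp:
  fixes X :: "'i \<Rightarrow> 'a \<Rightarrow> real" and b v t :: real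
  assumes "finite I" and indep: "indep_vars (\<lambda>_. borel) X I"
    and bound: "\<And>i x. i \<in> I \<Longrightarrow> x \<in> space M \<Longrightarrow> \<bar>X i x\<bar> \<le> b" and "0 < b"
    and mean: "\<And>i. i \<in> I \<Longrightarrow> expectation (X i) = 0"
    and var: "\<And>i. i \<in> I \<Longrightarrow> expectation (\<lambda>x. (X i x)\<^sup>2) \<le> v"
  shows "prob {x \<in> space M. t \<le> (\<Sum>i\<in>I. X i x)} \<le> exp (card I * v / b\<^sup>2 - t / b)"
proof -
  have [measurable]: "X i \<in> borel_measurable M" if "i \<in> I" for i
    using indep that unfolding indep_vars_def by auto
  have "ennreal (prob {x \<in> space M. t \<le> (\<Sum>i\<in>I. X i x)})
      \<le> ennreal (exp (- (1 / b) * t)) *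
        (\<integral>\<^sup>+x. ennreal (exp (1 / b * (\<Sum>i\<in>I. X i x))) * indicator (space M) x \<partial>M)"
    unfolding emeasure_eq_measure[symmetric] using \<open>0 < b\<close>
    by (intro Chernoff_ineq_nn_integral_ge) (auto intro!: borel_measurable_sum)
  also have "(\<integral>\<^sup>+x. ennreal (exp (1 / b * (\<Sum>i\<in>I. X i x))) * indicator (space M) x \<partial>M)
      = (\<integral>\<^sup>+x. (\<Prod>i\<in>I. ennreal (exp (X i x / b))) \<partial>M)"
    using \<open>finite I\<close>
    by (intro nn_integral_cong) (simp add: sum_distrib_left sum_divide_distrib exp_sum prod_ennreal)
  also have "\<dots> = (\<Prod>i\<in>I. \<integral>\<^sup>+x. ennreal (exp (X i x / b)) \<partial>M)"
    by (intro indep_vars_nn_integral \<open>finite I\<close> indep_vars_compose2[OF indep]) auto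
  also have "ennreal (exp (- (1 / b) * t)) * \<dots>
      \<le> ennreal (exp (- (1 / b) * t)) * (\<Prod>i\<in>I. ennreal (exp (v / b\<^sup>2)))"
    by (intro mult_left_mono prod_mono_ennreal nn_integral_exp_le bound mean var \<open>0 < b\<close>) auto
  also have "\<dots> = ennreal (exp (card I * v / b\<^sup>2 - t / b))"
    by (simp add: ennreal_power exp_diff exp_minus field_simps flip: ennreal_mult exp_of_nat_mult)
  finally show ?thesis
    by (simp add: ennreal_le_iff)
qed

lemma prob_abs_sum_ge_le_exp:
  fixes X :: "'i \<Rightarrow> 'a \<Rightarrow> real" and b v t :: real
  assumes "finite I" and indep: "indep_vars (\<lambda>_. borel) X I"
    and "\<And>i x. i \<in> I \<Longrightarrow> x \<in> space M \<Longrightarrow> \<bar>X i x\<bar> \<le> b" and "0 < b"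
    and "\<And>i. i \<in> I \<Longrightarrow> expectation (X i) = 0"
    and "\<And>i. i \<in> I \<Longrightarrow> expectation (\<lambda>x. (X i x)\<^sup>2) \<le> v"
  shows "prob {x \<in> space M. t \<le> \<bar>\<Sum>i\<in>I. X i x\<bar>} \<le> 2 * exp (card I * v / b\<^sup>2 - t / b)"
proof -
  have [measurable]: "X i \<in> borel_measurable M" if "i \<in> I" for i
    using indep that unfolding indep_vars_def by auto
  have indep_neg: "indep_vars (\<lambda>_. borel) (\<lambda>i x. - X i x) I"
    using indep_vars_compose2[OF indep, of "\<lambda>i y. - y" "\<lambda>_. borel"] by simp
  have "prob {x \<in> space M. t \<le> \<bar>\<Sum>i\<in>I. X i x\<bar>}
      \<le> prob ({x \<in> space M. t \<le> (\<Sum>i\<in>I. X i x)} \<union> {x \<in> space M. t \<le> (\<Sum>i\<in>I. - X i x)})"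
    by (intro finite_measure_mono) (auto simp: sum_negf abs_if)
  also have "\<dots> \<le> prob {x \<in> space M. t \<le> (\<Sum>i\<in>I. X i x)} + prob {x \<in> space M. t \<le> (\<Sum>i\<in>I. - X i x)}"
    by (rule measure_Un_le) auto
  also have "\<dots> \<le> exp (card I * v / b\<^sup>2 - t / b) + exp (card I * v / b\<^sup>2 - t / b)"
    using assms by (intro add_mono prob_sum_ge_le_exp[OF \<open>finite I\<close>] indep_neg) auto
  finally show ?thesis by simp
qed

lemma expectation_square_sum_indep:
  fixes X :: "'i \<Rightarrow> 'a \<Rightarrow> real"
  assumes "finite I" and indep: "indep_vars (\<lambda>_. borel) X I"
    and int: "\<And>i. i \<in> I \<Longrightarrow> integrable M (X i)"
    and int2: "\<And>i. i \<in> I \<Longrightarrow> integrable M (\<lambda>x. (X i x)\<^sup>2)"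
    and mean: "\<And>i. i \<in> I \<Longrightarrow> expectation (X i) = 0"
  shows "integrable M (\<lambda>x. (\<Sum>i\<in>I. X i x)\<^sup>2)"
    and "expectation (\<lambda>x. (\<Sum>i\<in>I. X i x)\<^sup>2) = (\<Sum>i\<in>I. expectation (\<lambda>x. (X i x)\<^sup>2))"
proof -
  have prod: "integrable M (\<lambda>x. X i x * X j x) \<and>
      expectation (\<lambda>x. X i x * X j x) = (if i = j then expectation (\<lambda>x. (X i x)\<^sup>2) else 0)"
    if "i \<in> I" "j \<in> I" for i j
  proof (cases "i = j")
    case True
    then show ?thesis using int2 that by (simp add: power2_eq_square)
  next
    case False
    have "indep_vars (\<lambda>_. borel) X {i, j}"
      by (rule indep_vars_subset[OF indep]) (use that in auto)
    moreover have "(\<lambda>x. X i x * X j x) = (\<lambda>x. \<Prod>k\<in>{i, j}. X k x)"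
      using False by simp
    ultimately show ?thesis
      using False that int mean indep_vars_integrable[of "{i, j}" X] indep_vars_lebesgue_integral[of "{i, j}" X]
      by auto
  qed
  have square: "(\<lambda>x. (\<Sum>i\<in>I. X i x)\<^sup>2) = (\<lambda>x. \<Sum>i\<in>I. \<Sum>j\<in>I. X i x * X j x)"
    by (simp add: power2_eq_square sum_product)
  show "integrable M (\<lambda>x. (\<Sum>i\<in>I. X i x)\<^sup>2)"
    unfolding square using prod by auto
  have "expectation (\<lambda>x. (\<Sum>i\<in>I. X i x)\<^sup>2) = (\<Sum>i\<in>I. \<Sum>j\<in>I. expectation (\<lambda>x. X i x * X j x))"
    unfolding square using prod by (simp add: Bochner_Integration.integral_sum)
  also have "\<dots> = (\<Sum>i\<in>I. \<Sum>j\<in>I. if i = j then expectation (\<lambda>x. (X i x)\<^sup>2) else 0)"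
    using prod by (intro sum.cong) auto
  finally show "expectation (\<lambda>x. (\<Sum>i\<in>I. X i x)\<^sup>2) = (\<Sum>i\<in>I. expectation (\<lambda>x. (X i x)\<^sup>2))"
    using \<open>finite I\<close> by simp
qed

lemma prob_abs_sum_ge_le_Chebyshev:
  fixes X :: "'i \<Rightarrow> 'a \<Rightarrow> real"
  assumes "finite I" and indep: "indep_vars (\<lambda>_. borel) X I"
    and int: "\<And>i. i \<in> I \<Longrightarrow> integrable M (X i)"
    and "\<And>i. i \<in> I \<Longrightarrow> integrable M (\<lambda>x. (X i x)\<^sup>2)"
    and mean: "\<And>i. i \<in> I \<Longrightarrow> expectation (X i) = 0" and "0 < c"
  shows "prob {x \<in> space M. c \<le> \<bar>\<Sum>i\<in>I. X i x\<bar>} \<le> (\<Sum>i\<in>I. expectation (\<lambda>x. (X i x)\<^sup>2)) / c\<^sup>2"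
proof -
  have [measurable]: "X i \<in> borel_measurable M" if "i \<in> I" for i
    using indep that unfolding indep_vars_def by auto
  have "expectation (\<lambda>x. \<Sum>i\<in>I. X i x) = 0"
    using int mean by (simp add: Bochner_Integration.integral_sum)
  then show ?thesis
    using Chebyshev_inequality[of "\<lambda>x. \<Sum>i\<in>I. X i x" c] expectation_square_sum_indep[OF assms(1-5)] \<open>0 < c\<close>
    by (simp add: borel_measurable_sum)
qed

end

lemma floor_log_bounds:
  assumes "1 \<le> n"
  shows "(2::real) ^ floor_log n \<le> real n" "real n < 2 ^ Suc (floor_log n)"
proof -
  have "2 ^ floor_log n \<le> n" "n < 2 ^ Suc (floor_log n)"
    using floor_log_exp2_le[of n] floor_log_exp2_gt[of n] assms by simp_all
  then show "(2::real) ^ floor_log n \<le> real n" "real n < 2 ^ Suc (floor_log n)"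
    by (metis of_nat_le_iff of_nat_less_iff of_nat_numeral of_nat_power)+
qed

lemma filterlim_floor_log_sequentially: "filterlim floor_log sequentially sequentially"
  unfolding filterlim_at_top
proof
  fix m :: nat
  show "eventually (\<lambda>n. m \<le> floor_log n) sequentially"
    using eventually_ge_at_top[of "2 ^ m"]
    by eventually_elim (metis floor_log_power floor_log_mono monoD)
qed

lemma ln_le_floor_log_plus_one:
  assumes "1 \<le> n"
  shows "ln (real n) \<le> real (floor_log n) + 1"
proof -
  have "ln (real n) \<le> ln (2 ^ Suc (floor_log n))"
    using floor_log_bounds[OF assms] assms by simp
  also have "\<dots> = (real (floor_log n) + 1) * ln 2"
    by (subst ln_realpow) simp
  also have "\<dots> \<le> real (floor_log n) + 1"
    using ln_2_less_1 by (simp add: mult_left_le)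
  finally show ?thesis .
qed

definition dyadic_norm :: "real \<Rightarrow> nat \<Rightarrow> real" where
  "dyadic_norm p m = sqrt (2 ^ m) * ln (2 ^ m) powr p"

lemma dyadic_norm_floor_log_le:
  assumes "1 \<le> n" "0 \<le> p"
  shows "dyadic_norm p (floor_log n) \<le> real n powr (1/2) * ln (real n) powr p"
proof -
  have n: "(2::real) ^ floor_log n \<le> real n"
    using floor_log_bounds[OF assms(1)] by simp
  then have "ln (2 ^ floor_log n) \<le> ln (real n)"
    by (rule ln_mono) simp
  then show ?thesis
    unfolding dyadic_norm_def using n assms
    by (intro mult_mono powr_mono2) (simp_all add: powr_half_sqrt)
qed

lemma dyadic_norm_pos: "1 \<le> m \<Longrightarrow> 0 < dyadic_norm p m"
  by (simp add: dyadic_norm_def ln_realpow)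

lemma dyadic_norm_square: "(dyadic_norm p m)\<^sup>2 = 2 ^ m * ln (2 ^ m) powr (2 * p)"
proof -
  have "ln ((2::real) ^ m) powr (2 * p) = ln (2 ^ m) powr p * ln (2 ^ m) powr p"
    by (simp only: mult_2 powr_add)
  then show ?thesis
    by (simp add: dyadic_norm_def power_mult_distrib power2_eq_square)
qed

text \<open>
  For \<open>2^(m+1)\<close> summands truncated at this level, the variance term of the Bernstein exponent is
  \<open>O(m)\<close>, while the deviation term at scale \<open>dyadic_norm p m\<close> grows like \<open>m\<^sup>p\<^sup>+\<^sup>1\<^sup>/\<^sup>2\<close>.
\<close>

definition trunc_level :: "nat \<Rightarrow> real" where
  "trunc_level m = sqrt (2 ^ m / (real m + 1))"

lemma trunc_level_pos: "0 < trunc_level m"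
  by (simp add: trunc_level_def)

lemma trunc_level_square: "(trunc_level m)\<^sup>2 = 2 ^ m / (real m + 1)"
  by (simp add: trunc_level_def)

lemma two_pow_div_trunc_level: "2 ^ m / trunc_level m = sqrt (2 ^ m) * sqrt (real m + 1)"
proof -
  have "(2::real) ^ m = sqrt (2 ^ m) * sqrt (2 ^ m)"
    by simp
  then show ?thesis
    by (simp add: trunc_level_def real_sqrt_divide field_simps)
qed

lemma dyadic_norm_div_trunc_level:
  "dyadic_norm p m / trunc_level m = ln (2 ^ m) powr p * sqrt (real m + 1)"
  by (simp add: dyadic_norm_def trunc_level_def real_sqrt_divide)

lemma eventually_two_pow_mult_div_trunc_level_le:
  fixes s :: real
  assumes "0 < \<delta>" "1/2 < p"
  shows "eventually (\<lambda>m. 2 * (2 ^ Suc m * s / trunc_level m) \<le> \<delta> * dyadic_norm p m) sequentially"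
proof -
  have "eventually (\<lambda>m::nat. 4 * s * sqrt (real m + 1) \<le> \<delta> * ln (2 ^ m) powr p) sequentially"
    using assms by real_asymp
  then show ?thesis
  proof eventually_elim
    case (elim m)
    have "2 * (2 ^ Suc m * s / trunc_level m) = 4 * s * (2 ^ m / trunc_level m)"
      by simp
    also have "\<dots> = sqrt (2 ^ m) * (4 * s * sqrt (real m + 1))"
      by (simp add: two_pow_div_trunc_level)
    also have "\<dots> \<le> sqrt (2 ^ m) * (\<delta> * ln (2 ^ m) powr p)"
      using elim by (intro mult_left_mono) simp_all
    finally show ?case
      by (simp add: dyadic_norm_def mult_ac)
  qed
qed

lemma summable_inverse_ln_two_pow_powr:
  fixes q :: real
  assumes "1 < q"
  shows "summable (\<lambda>m::nat. inverse (ln (2 ^ m) powr q))"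
proof -
  have "summable (\<lambda>m::nat. inverse (ln 2 powr q) * real m powr (- q))"
    using assms by (intro summable_mult) (simp add: summable_real_powr_iff)
  moreover have "inverse (ln (2 ^ m) powr q) = inverse (ln 2 powr q) * real m powr (- q)" for m :: nat
    by (simp add: ln_realpow powr_mult powr_minus)
  ultimately show ?thesis
    by simp
qed

locale centered_indep_sequence = prob_space +
  fixes \<xi> :: "nat \<Rightarrow> 'a \<Rightarrow> real" and s :: real
  assumes indep: "indep_vars (\<lambda>_. borel) \<xi> {1..}"
    and integrable: "\<And>i. 1 \<le> i \<Longrightarrow> integrable M (\<xi> i)"
    and integrable_square: "\<And>i. 1 \<le> i \<Longrightarrow> integrable M (\<lambda>x. (\<xi> i x)\<^sup>2)"
    and mean_zero: "\<And>i. 1 \<le> i \<Longrightarrow> expectation (\<xi> i) = 0"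
    and second_moment_le: "\<And>i. 1 \<le> i \<Longrightarrow> expectation (\<lambda>x. (\<xi> i x)\<^sup>2) \<le> s"
begin

lemma borel_measurable_\<xi>: "1 \<le> i \<Longrightarrow> \<xi> i \<in> borel_measurable M"
  using integrable by blast

lemma second_moment_bound_nonneg: "0 \<le> s"
  by (rule order_trans[OF Bochner_Integration.integral_nonneg second_moment_le[of 1]]) simp_all

lemma indep_vars_compose_subset:
  assumes "I \<subseteq> {1..}" "\<And>i. i \<in> I \<Longrightarrow> f i \<in> borel_measurable borel"
  shows "indep_vars (\<lambda>_. borel) (\<lambda>i x. f i (\<xi> i x)) I"
  using indep_vars_compose2[OF indep_vars_subset[OF indep assms(1)], of f "\<lambda>_. borel"] assms(2)
  by simp

lemma prob_abs_sum_centered_trunc_le_ge: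
  assumes "finite I" "I \<subseteq> {1..}" "0 < T" "s \<le> T\<^sup>2"
  shows "prob {x \<in> space M. t \<le> \<bar>\<Sum>i\<in>I. trunc_le T (\<xi> i x) - expectation (\<lambda>y. trunc_le T (\<xi> i y))\<bar>}
    \<le> 2 * exp (card I * s / (2 * T)\<^sup>2 - t / (2 * T))"
proof (rule prob_abs_sum_ge_le_exp[OF \<open>finite I\<close>])
  fix i assume "i \<in> I"
  then have i: "1 \<le> i" using assms(2) by auto
  note \<xi> = borel_measurable_\<xi>[OF i] integrable[OF i] integrable_square[OF i]
  have Y: "integrable M (\<lambda>x. trunc_le T (\<xi> i x))" "integrable M (\<lambda>x. (trunc_le T (\<xi> i x))\<^sup>2)"
    "expectation (\<lambda>x. (trunc_le T (\<xi> i x))\<^sup>2) \<le> s"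
    using square_integrable_dominated[OF _ \<xi>(2,3), of "\<lambda>x. trunc_le T (\<xi> i x)"] \<xi>(1)
      second_moment_le[OF i] by (auto simp: abs_trunc_le_le)
  have "s / T \<le> T"
    using assms(3,4) by (simp add: divide_le_eq power2_eq_square)
  then have mean: "\<bar>expectation (\<lambda>x. trunc_le T (\<xi> i x))\<bar> \<le> T"
    using abs_expectation_trunc_le_le[OF \<xi> mean_zero[OF i] second_moment_le[OF i] \<open>0 < T\<close>]
    by linarith
  show "\<bar>trunc_le T (\<xi> i x) - expectation (\<lambda>y. trunc_le T (\<xi> i y))\<bar> \<le> 2 * T" for x
    using abs_trunc_le_le(2)[of T "\<xi> i x"] mean \<open>0 < T\<close> by simp
  show "expectation (\<lambda>x. trunc_le T (\<xi> i x) - expectation (\<lambda>y. trunc_le T (\<xi> i y))) = 0"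
    using centered_integrable_and_moments(3)[OF Y(1,2)] .
  show "expectation (\<lambda>x. (trunc_le T (\<xi> i x) - expectation (\<lambda>y. trunc_le T (\<xi> i y)))\<^sup>2) \<le> s"
    using centered_integrable_and_moments(4)[OF Y(1,2)] Y(3) by simp
qed (use assms borel_measurable_\<xi> in \<open>auto intro!: indep_vars_compose_subset\<close>)

lemma prob_abs_sum_centered_trunc_gt_ge:
  assumes "finite I" "I \<subseteq> {1..}" "0 < T" "0 < c"
  shows "prob {x \<in> space M. c \<le> \<bar>\<Sum>i\<in>I. \<bar>trunc_gt T (\<xi> i x)\<bar> - expectation (\<lambda>y. \<bar>trunc_gt T (\<xi> i y)\<bar>)\<bar>}
    \<le> card I * s / c\<^sup>2"
proof -
  have Y: "integrable M (\<lambda>x. \<bar>trunc_gt T (\<xi> i x)\<bar>)"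
    "integrable M (\<lambda>x. (\<bar>trunc_gt T (\<xi> i x)\<bar>)\<^sup>2)"
    "expectation (\<lambda>x. (\<bar>trunc_gt T (\<xi> i x)\<bar>)\<^sup>2) \<le> s" if "i \<in> I" for i
  proof -
    have i: "1 \<le> i" using assms(2) that by auto
    show "integrable M (\<lambda>x. \<bar>trunc_gt T (\<xi> i x)\<bar>)"
      "integrable M (\<lambda>x. (\<bar>trunc_gt T (\<xi> i x)\<bar>)\<^sup>2)"
      "expectation (\<lambda>x. (\<bar>trunc_gt T (\<xi> i x)\<bar>)\<^sup>2) \<le> s"
      using square_integrable_dominated[OF _ integrable[OF i] integrable_square[OF i],
          of "\<lambda>x. \<bar>trunc_gt T (\<xi> i x)\<bar>"] borel_measurable_\<xi>[OF i] second_moment_le[OF i]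
      by (auto simp: abs_trunc_gt_le)
  qed
  have "prob {x \<in> space M. c \<le> \<bar>\<Sum>i\<in>I. \<bar>trunc_gt T (\<xi> i x)\<bar> - expectation (\<lambda>y. \<bar>trunc_gt T (\<xi> i y)\<bar>)\<bar>}
      \<le> (\<Sum>i\<in>I. expectation (\<lambda>x. (\<bar>trunc_gt T (\<xi> i x)\<bar> - expectation (\<lambda>y. \<bar>trunc_gt T (\<xi> i y)\<bar>))\<^sup>2)) / c\<^sup>2"
    using assms centered_integrable_and_moments(1-3)[OF Y(1,2)] borel_measurable_\<xi>
    by (intro prob_abs_sum_ge_le_Chebyshev indep_vars_compose_subset) auto
  also have "\<dots> \<le> (\<Sum>i\<in>I. s) / c\<^sup>2"
    using centered_integrable_and_moments(4)[OF Y(1,2)] Y(3)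
    by (intro divide_right_mono sum_mono) (auto intro: order_trans)
  finally show ?thesis
    by simp
qed

text \<open>
  The events below depend on the arbitrary sets \<open>A n\<close>, so they have to be controlled for each
  \<open>n\<close> separately: the Bernstein bound makes their probabilities \<open>O(n\<^sup>-\<^sup>2)\<close>.
\<close>

lemma prob_abs_sum_centered_trunc_le_ge_le_inverse_square:
  assumes "A \<subseteq> {1..n}" "1 \<le> n"
    and small_s: "s * (real (floor_log n) + 1) \<le> 2 ^ floor_log n"
    and large_norm: "(s + 4) * sqrt (real (floor_log n) + 1) \<le> \<delta> * ln (2 ^ floor_log n) powr p"
  defines "T \<equiv> trunc_level (floor_log n)"
  shows "prob {x \<in> space M. \<delta> * dyadic_norm p (floor_log n)
      \<le> \<bar>\<Sum>i\<in>A. trunc_le T (\<xi> i x) - expectation (\<lambda>y. trunc_le T (\<xi> i y))\<bar>}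
    \<le> 2 * inverse (real n ^ 2)"
proof -
  define m where "m = floor_log n"
  have T: "0 < T" "T\<^sup>2 = 2 ^ m / (real m + 1)"
    by (simp_all add: T_def m_def trunc_level_pos trunc_level_square)
  have "real (card A) \<le> 2 * 2 ^ m"
    using card_mono[OF _ assms(1)] floor_log_bounds(2)[OF \<open>1 \<le> n\<close>] by (simp add: m_def)
  then have "card A * s / (2 * T)\<^sup>2 \<le> 2 * 2 ^ m * s / (2 * T)\<^sup>2"
    using second_moment_bound_nonneg by (intro divide_right_mono mult_right_mono) auto
  also have "\<dots> = s * (real m + 1) / 2"
    unfolding power_mult_distrib T(2) by (simp add: field_simps)
  finally have variance_term: "card A * s / (2 * T)\<^sup>2 \<le> s * (real m + 1) / 2" .
  have "(s + 4) * (real m + 1) / 2 = (s + 4) * sqrt (real m + 1) * sqrt (real m + 1) / 2"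
    by simp
  also have "\<dots> \<le> \<delta> * ln (2 ^ m) powr p * sqrt (real m + 1) / 2"
    using large_norm by (intro divide_right_mono mult_right_mono) (simp_all add: m_def)
  also have "\<dots> = \<delta> * dyadic_norm p m / (2 * T)"
    using dyadic_norm_div_trunc_level[of p m] T by (simp add: T_def m_def field_simps)
  finally have "card A * s / (2 * T)\<^sup>2 - \<delta> * dyadic_norm p m / (2 * T) \<le> - 2 * (real m + 1)"
    using variance_term by (simp add: algebra_simps)
  also have "\<dots> \<le> - 2 * ln (real n)"
    using ln_le_floor_log_plus_one[OF \<open>1 \<le> n\<close>] by (simp add: m_def)
  finally have "exp (card A * s / (2 * T)\<^sup>2 - \<delta> * dyadic_norm p m / (2 * T)) \<le> exp (ln (inverse (real n ^ 2)))"
    using \<open>1 \<le> n\<close> by (simp add: ln_inverse ln_realpow)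
  also have "\<dots> = inverse (real n ^ 2)"
    using \<open>1 \<le> n\<close> by simp
  finally have exp_le: "exp (card A * s / (2 * T)\<^sup>2 - \<delta> * dyadic_norm p m / (2 * T)) \<le> inverse (real n ^ 2)" .
  have "s \<le> T\<^sup>2"
    using small_s by (simp add: T(2) m_def field_simps)
  moreover have "finite A" "A \<subseteq> {1..}"
    using assms(1) by (auto intro: finite_subset)
  ultimately show ?thesis
    using prob_abs_sum_centered_trunc_le_ge[of A T "\<delta> * dyadic_norm p m"] T(1) exp_le
    by (simp add: m_def)
qed

lemma AE_eventually_abs_sum_centered_trunc_le_less:
  assumes A: "\<And>n. A n \<subseteq> {1..n}" and "1/2 < p" "0 < \<delta>"
  shows "AE x in M. eventually (\<lambda>n. \<bar>\<Sum>i\<in>A n. trunc_le (trunc_level (floor_log n)) (\<xi> i x)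
      - expectation (\<lambda>y. trunc_le (trunc_level (floor_log n)) (\<xi> i y))\<bar>
    < \<delta> * dyadic_norm p (floor_log n)) sequentially"
proof -
  define E where "E n = {x \<in> space M. \<delta> * dyadic_norm p (floor_log n)
      \<le> \<bar>\<Sum>i\<in>A n. trunc_le (trunc_level (floor_log n)) (\<xi> i x)
        - expectation (\<lambda>y. trunc_le (trunc_level (floor_log n)) (\<xi> i y))\<bar>}" for n
  have "E n \<in> sets M" for n
  proof -
    have "(\<lambda>x. \<Sum>i\<in>A n. trunc_le (trunc_level (floor_log n)) (\<xi> i x)
        - expectation (\<lambda>y. trunc_le (trunc_level (floor_log n)) (\<xi> i y))) \<in> borel_measurable M"
      using A borel_measurable_\<xi> by (intro borel_measurable_sum borel_measurable_diff) force+
    then show ?thesis unfolding E_def by measurable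
  qed
  moreover have "summable (\<lambda>n. measure M (E n))"
  proof (rule summable_comparison_test_ev)
    have "eventually (\<lambda>m::nat. s * (real m + 1) \<le> 2 ^ m \<and>
        (s + 4) * sqrt (real m + 1) \<le> \<delta> * ln (2 ^ m) powr p) sequentially"
      using assms by (intro eventually_conj; real_asymp)
    from eventually_compose_filterlim[OF this filterlim_floor_log_sequentially]
    have "eventually (\<lambda>n. 1 \<le> n \<and> s * (real (floor_log n) + 1) \<le> 2 ^ floor_log n \<and>
        (s + 4) * sqrt (real (floor_log n) + 1) \<le> \<delta> * ln (2 ^ floor_log n) powr p) sequentially"
      using eventually_ge_at_top[of 1] by eventually_elim simp
    then show "eventually (\<lambda>n. norm (measure M (E n)) \<le> 2 * inverse (real n ^ 2)) sequentially"
      unfolding E_def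
      by eventually_elim (use A prob_abs_sum_centered_trunc_le_ge_le_inverse_square in auto)
    show "summable (\<lambda>n. 2 * inverse (real n ^ 2))"
      by (intro summable_mult inverse_power_summable) auto
  qed
  ultimately have "AE x in M. eventually (\<lambda>n. x \<in> space M - E n) sequentially"
    by (intro borel_cantelli_AE1) (auto simp: emeasure_eq_measure)
  then show ?thesis
    by (rule AE_mp) (auto intro!: AE_I2 elim!: eventually_mono simp: E_def)
qed

text \<open>
  The large values are instead dominated, uniformly in \<open>A \<subseteq> {1..n}\<close>, by the sum over the whole
  dyadic range \<open>{1..2^(m+1)}\<close>; Chebyshev suffices there since there is only one event per \<open>m\<close>.
\<close>

lemma AE_eventually_sum_abs_trunc_gt_less:
  assumes "1/2 < p" "0 < \<delta>"
  shows "AE x in M. eventually (\<lambda>m. (\<Sum>i\<in>{1..2 ^ Suc m}. \<bar>trunc_gt (trunc_level m) (\<xi> i x)\<bar>)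
    < \<delta> * dyadic_norm p m + 2 ^ Suc m * s / trunc_level m) sequentially"
proof -
  define B :: "nat \<Rightarrow> nat set" where "B m = {1..2 ^ Suc m}" for m
  define W where "W m i = (\<lambda>x. \<bar>trunc_gt (trunc_level m) (\<xi> i x)\<bar>)" for m i
  define E where "E m = {x \<in> space M. \<delta> * dyadic_norm p m
      \<le> \<bar>\<Sum>i\<in>B m. W m i x - expectation (W m i)\<bar>}" for m
  have "E m \<in> sets M" for m
  proof -
    have "(\<lambda>x. \<Sum>i\<in>B m. W m i x - expectation (W m i)) \<in> borel_measurable M"
      using borel_measurable_\<xi> by (intro borel_measurable_sum borel_measurable_diff) (auto simp: B_def W_def)
    then show ?thesis unfolding E_def by measurable
  qed
  moreover have "summable (\<lambda>m. measure M (E m))"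
  proof (rule summable_comparison_test_ev)
    show "summable (\<lambda>m::nat. 2 * s / \<delta>\<^sup>2 * inverse (ln (2 ^ m) powr (2 * p)))"
      using assms by (intro summable_mult summable_inverse_ln_two_pow_powr) simp
    show "eventually (\<lambda>m. norm (measure M (E m)) \<le> 2 * s / \<delta>\<^sup>2 * inverse (ln (2 ^ m) powr (2 * p))) sequentially"
      using eventually_ge_at_top[of 1]
    proof eventually_elim
      case (elim m)
      have "measure M (E m) \<le> 2 ^ Suc m * s / (\<delta> * dyadic_norm p m)\<^sup>2"
        using prob_abs_sum_centered_trunc_gt_ge[of "B m" "trunc_level m" "\<delta> * dyadic_norm p m"]
          dyadic_norm_pos[OF elim] assms trunc_level_pos
        by (simp add: E_def W_def B_def)
      also have "\<dots> = 2 * s / \<delta>\<^sup>2 * inverse (ln (2 ^ m) powr (2 * p))"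
        using elim assms unfolding power_mult_distrib dyadic_norm_square
        by (simp add: field_simps ln_realpow)
      finally show ?case
        by simp
    qed
  qed
  ultimately have "AE x in M. eventually (\<lambda>m. x \<in> space M - E m) sequentially"
    by (intro borel_cantelli_AE1) (auto simp: emeasure_eq_measure)
  then show ?thesis
  proof (rule AE_mp, intro AE_I2 impI, elim eventually_mono)
    fix x m assume "x \<in> space M" "x \<in> space M - E m"
    then have "(\<Sum>i\<in>B m. W m i x) < \<delta> * dyadic_norm p m + (\<Sum>i\<in>B m. expectation (W m i))"
      by (simp add: E_def sum_subtractf)
    also have "(\<Sum>i\<in>B m. expectation (W m i)) \<le> (\<Sum>i\<in>B m. s / trunc_level m)"
      using borel_measurable_\<xi> integrable_square second_moment_le trunc_level_pos
      by (intro sum_mono) (auto simp: B_def W_def intro!: expectation_abs_trunc_gt_le)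
    finally show "(\<Sum>i\<in>{1..2 ^ Suc m}. \<bar>trunc_gt (trunc_level m) (\<xi> i x)\<bar>)
        < \<delta> * dyadic_norm p m + 2 ^ Suc m * s / trunc_level m"
      by (simp add: B_def W_def)
  qed
qed

lemma abs_sum_le_truncation_split:
  assumes A: "A \<subseteq> {1..2 ^ Suc m}"
  defines "T \<equiv> trunc_level m"
  shows "\<bar>\<Sum>i\<in>A. \<xi> i x\<bar> \<le> \<bar>\<Sum>i\<in>A. trunc_le T (\<xi> i x) - expectation (\<lambda>y. trunc_le T (\<xi> i y))\<bar>
    + 2 ^ Suc m * s / T + (\<Sum>i\<in>{1..2 ^ Suc m}. \<bar>trunc_gt T (\<xi> i x)\<bar>)"
proof -
  have "finite A"
    using A by (rule finite_subset) simp
  have "\<bar>\<Sum>i\<in>A. expectation (\<lambda>y. trunc_le T (\<xi> i y))\<bar> \<le> (\<Sum>i\<in>A. s / T)"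
    using A borel_measurable_\<xi> integrable integrable_square mean_zero second_moment_le
      trunc_level_pos[of m]
    by (intro order_trans[OF sum_abs] sum_mono abs_expectation_trunc_le_le)
      (auto simp: T_def dest!: subsetD[OF A])
  also have "\<dots> = card A * s / T"
    by simp
  also have "\<dots> \<le> 2 ^ Suc m * s / T"
  proof -
    have "card A \<le> 2 ^ Suc m"
      using card_mono[OF _ A] by simp
    then have "real (card A) \<le> 2 ^ Suc m"
      by (metis of_nat_le_iff of_nat_numeral of_nat_power)
    then show ?thesis
      using second_moment_bound_nonneg trunc_level_pos[of m]
      by (intro divide_right_mono mult_right_mono) (simp_all add: T_def)
  qed
  finally have means: "\<bar>\<Sum>i\<in>A. expectation (\<lambda>y. trunc_le T (\<xi> i y))\<bar> \<le> 2 ^ Suc m * s / T" .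
  have large: "\<bar>\<Sum>i\<in>A. trunc_gt T (\<xi> i x)\<bar> \<le> (\<Sum>i\<in>{1..2 ^ Suc m}. \<bar>trunc_gt T (\<xi> i x)\<bar>)"
    using A by (intro order_trans[OF sum_abs] sum_mono2) auto
  have "(\<Sum>i\<in>A. \<xi> i x) = (\<Sum>i\<in>A. trunc_le T (\<xi> i x) - expectation (\<lambda>y. trunc_le T (\<xi> i y)))
      + (\<Sum>i\<in>A. expectation (\<lambda>y. trunc_le T (\<xi> i y))) + (\<Sum>i\<in>A. trunc_gt T (\<xi> i x))"
    by (simp add: trunc_le_plus_trunc_gt flip: sum.distrib)
  then show ?thesis
    using means large by linarith
qed

lemma AE_eventually_abs_sum_le:
  assumes A: "\<And>n. A n \<subseteq> {1..n}" and "1/2 < p" "0 < \<delta>"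
  shows "AE x in M. eventually (\<lambda>n. \<bar>\<Sum>i\<in>A n. \<xi> i x\<bar> \<le> \<delta> * dyadic_norm p (floor_log n)) sequentially"
proof -
  have "0 < \<delta> / 3"
    using \<open>0 < \<delta>\<close> by simp
  have means: "eventually (\<lambda>n. 2 * (2 ^ Suc (floor_log n) * s / trunc_level (floor_log n))
      \<le> \<delta> / 3 * dyadic_norm p (floor_log n)) sequentially"
    by (rule eventually_compose_filterlim[OF _ filterlim_floor_log_sequentially])
      (rule eventually_two_pow_mult_div_trunc_level_le[OF \<open>0 < \<delta> / 3\<close> \<open>1/2 < p\<close>])
  show ?thesis
    using AE_eventually_abs_sum_centered_trunc_le_less[OF A \<open>1/2 < p\<close> \<open>0 < \<delta> / 3\<close>]
      AE_eventually_sum_abs_trunc_gt_less[OF \<open>1/2 < p\<close> \<open>0 < \<delta> / 3\<close>]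
  proof eventually_elim
    case (elim x)
    show ?case
      using elim(1) eventually_compose_filterlim[OF elim(2) filterlim_floor_log_sequentially] means
    proof eventually_elim
      case (elim n)
      have "A n \<subseteq> {1..2 ^ Suc (floor_log n)}"
        using A[of n] floor_log_exp2_gt[of n] by auto
      from abs_sum_le_truncation_split[OF this, of x] show ?case
        using elim by linarith
    qed
  qed
qed

theorem AE_sum_div_tendsto_zero:
  assumes A: "\<And>n. A n \<subseteq> {1..n}" and "1/2 < p"
  shows "AE x in M. (\<lambda>n. (\<Sum>i\<in>A n. \<xi> i x) / (real n powr (1/2) * ln (real n) powr p)) \<longlonglongrightarrow> 0"
proof -
  have "AE x in M. \<forall>j::nat. eventually (\<lambda>n. \<bar>\<Sum>i\<in>A n. \<xi> i x\<bar>
      \<le> inverse (real (Suc j)) * dyadic_norm p (floor_log n)) sequentially"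
    unfolding AE_all_countable using AE_eventually_abs_sum_le[OF A \<open>1/2 < p\<close>] by simp
  then show ?thesis
  proof (rule AE_mp, intro AE_I2 impI)
    fix x
    assume small: "\<forall>j::nat. eventually (\<lambda>n. \<bar>\<Sum>i\<in>A n. \<xi> i x\<bar>
      \<le> inverse (real (Suc j)) * dyadic_norm p (floor_log n)) sequentially"
    have "(\<lambda>n. \<Sum>i\<in>A n. \<xi> i x) \<in> o(\<lambda>n. real n powr (1/2) * ln (real n) powr p)"
    proof (rule landau_o.smallI)
      fix c :: real
      assume "0 < c"
      then obtain j where j: "inverse (real (Suc j)) < c"
        using ex_inverse_of_nat_less[of c] by (metis Suc_pred)
      show "eventually (\<lambda>n. norm (\<Sum>i\<in>A n. \<xi> i x) \<le> c * norm (real n powr (1/2) * ln (real n) powr p)) sequentially"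
        using small[rule_format, of j] eventually_ge_at_top[of 1]
      proof eventually_elim
        case (elim n)
        have "0 \<le> dyadic_norm p (floor_log n)"
          by (simp add: dyadic_norm_def)
        then have "inverse (real (Suc j)) * dyadic_norm p (floor_log n) \<le> c * dyadic_norm p (floor_log n)"
          using j by (intro mult_right_mono) simp_all
        also have "\<dots> \<le> c * (real n powr (1/2) * ln (real n) powr p)"
          using dyadic_norm_floor_log_le[OF elim(2)] \<open>0 < c\<close> \<open>1/2 < p\<close> by simp
        finally show ?case
          using elim(1) elim(2) by simp
      qed
    qed
    then show "(\<lambda>n. (\<Sum>i\<in>A n. \<xi> i x) / (real n powr (1/2) * ln (real n) powr p)) \<longlonglongrightarrow> 0"
      by (rule smalloD_tendsto)
  qed
qed

end

theorem theorem18: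
  fixes M :: "'a measure" and \<xi> :: "nat \<Rightarrow> 'a \<Rightarrow> real"
    and \<sigma> \<epsilon> :: real and k :: "nat \<Rightarrow> nat" and Jk :: "nat \<Rightarrow> nat set"
  assumes "prob_space M"
    and "\<And>i. i \<ge> 1 \<Longrightarrow> \<xi> i \<in> borel_measurable M"
    and "prob_space.indep_vars M (\<lambda>_. borel) \<xi> {1..}"
    and "\<And>i. i \<ge> 1 \<Longrightarrow> distr M borel (\<xi> i) = distr M borel (\<xi> 1)"
    and "\<And>i. i \<ge> 1 \<Longrightarrow> integrable M (\<xi> i)"
    and "\<And>i. i \<ge> 1 \<Longrightarrow> integrable M (\<lambda>x. (\<xi> i x)\<^sup>2)"
    and "\<And>i. i \<ge> 1 \<Longrightarrow> (\<integral>x. \<xi> i x \<partial>M) = 0"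
    and "\<And>i. i \<ge> 1 \<Longrightarrow> (\<integral>x. (\<xi> i x)\<^sup>2 \<partial>M) = \<sigma>\<^sup>2"
    and "\<epsilon> > 0"
    and "\<And>n. n \<ge> 2 \<Longrightarrow> 0 < k n \<and> k n < n"
    and "(\<lambda>n. real (k n) / real n) \<longlonglongrightarrow> 0"
    and "\<And>n. Jk n \<subseteq> {1..n}"
    and "\<And>n. card (Jk n) = k n"
  shows "AE x in M. (\<lambda>n. (\<Sum>i\<in>{1..n} - Jk n. \<xi> i x) /
            (real n powr (1/2) * ln (real n) powr (1/2 + \<epsilon>))) \<longlonglongrightarrow> 0"
proof -
  interpret prob_space M
    by (rule assms(1))
  interpret centered_indep_sequence M \<xi> "\<sigma>\<^sup>2"
    using assms(3) by unfold_locales (simp_all add: assms(5-8))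
  show ?thesis
    using assms(9) by (intro AE_sum_div_tendsto_zero) auto
qed

end
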